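(* Let $\kappa>0$, $u_0>0$, and let $u$ be the solution of $\frac{d}{dr}\big(u'/\sqrt{1+u'^2}\big)=\kappa u$, $u(0)=u_0$, $u'(0)=0$. Let $a>0$ and $0\le\gamma<\pi/2$ be such that $u$ is defined on $[0,a)$ and $\sin\psi(a)=\cos\gamma$, where $\sin\psi=u'/\sqrt{1+u'^2}$ (extended continuously to $r=a$). Then $$u(a)<\frac{\cos\gamma}{\kappa a}-\frac a2\tan\gamma+\frac a{2\cos^2\gamma}\Big(\frac\pi2-\gamma\Big).$$
   Context: $u$ is the profile of a $\kappa$-cylindrical capillary surface $z=u(x)$ between vertical plates $x=\pm a$ with contact angle $\gamma$; $u(a)$ is the outer height. *)

theory Defs
  imports "HOL-Analysis.Analysis"
begin

end

(* The first integral
   kappa * u^2 / 2 + cos psi = const keeps u positive; hence sin_psi and u increase, and sin_psi,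
   being strictly convex with sin_psi 0 = 0, lies below its chord: sin_psi r < r / R, the sine of
   the inclination of the circle of radius R = a / cos gamma. As (r u - sin_psi / kappa)' = r tan psi,
   comparing tan psi with the circle's slope gives
   a u(a) - cos gamma / kappa < R^2 / 2 * (theta - sin theta * cos theta),  theta = pi / 2 - gamma,
   the area of a circular segment, which is the claimed bound after dividing by a. *)
theory Submission
  imports Defs
begin

lemma strict_mono_on_if_deriv_pos:
  fixes f f' :: "real \<Rightarrow> real"
  assumes cont: "continuous_on {b..<a} f"
    and deriv: "\<And>x. b < x \<Longrightarrow> x < a \<Longrightarrow> (f has_real_derivative f' x) (at x)"
    and pos: "\<And>x. b < x \<Longrightarrow> x < a \<Longrightarrow> 0 < f' x"
  shows "strict_mono_on {b..<a} f"
proof (rule strict_mono_onI)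
  fix r s assume r: "r \<in> {b..<a}" and s: "s \<in> {b..<a}" and "r < s"
  show "f r < f s"
  proof (rule DERIV_pos_imp_increasing_open[OF \<open>r < s\<close>])
    fix x assume "r < x" "x < s"
    then have "b < x" "x < a" using r s by auto
    then show "\<exists>y. DERIV f x :> y \<and> 0 < y" using deriv pos by blast
  next
    show "continuous_on {r..s} f" by (rule continuous_on_subset[OF cont]) (use r s in auto)
  qed
qed

lemma strict_mono_on_less_left_limit:
  fixes g :: "real \<Rightarrow> real"
  assumes mono: "strict_mono_on {r..<a} g" and "r < a" and lim: "(g \<longlongrightarrow> l) (at_left a)"
  shows "g r < l"
proof -
  define m where "m = (r + a) / 2"
  have m: "r < m" "m < a" using \<open>r < a\<close> by (auto simp: m_def)
  have "eventually (\<lambda>s. g m \<le> g s) (at_left a)"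
    using eventually_at_left_real[OF m(2)]
    by eventually_elim (use m in \<open>auto intro!: less_imp_le strict_mono_onD[OF mono]\<close>)
  then have "g m \<le> l" by (rule tendsto_lowerbound[OF lim]) simp
  moreover have "g r < g m" using m by (intro strict_mono_onD[OF mono]) auto
  ultimately show ?thesis by simp
qed

lemma strict_mono_on_quotient_if_deriv_strict_mono:
  fixes f f' :: "real \<Rightarrow> real"
  assumes "f 0 = 0" and cont: "continuous_on {0..<a} f"
    and deriv: "\<And>x. 0 < x \<Longrightarrow> x < a \<Longrightarrow> (f has_real_derivative f' x) (at x)"
    and mono: "strict_mono_on {0<..<a} f'"
  shows "strict_mono_on {0<..<a} (\<lambda>x. f x / x)"
proof (rule strict_mono_onI)
  have mvt: "\<exists>z. p < z \<and> z < q \<and> f q - f p = (q - p) * f' z" if pq: "0 \<le> p" "p < q" "q < a" for p q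
  proof -
    have "continuous_on {p..q} f" by (rule continuous_on_subset[OF cont]) (use pq in auto)
    moreover have "f differentiable (at x)" if "p < x" "x < q" for x
      using deriv[of x] pq that by (auto simp: real_differentiable_def)
    ultimately obtain l z where z: "p < z" "z < q" "DERIV f z :> l" "f q - f p = (q - p) * l"
      using MVT[OF \<open>p < q\<close>] by blast
    have "DERIV f z :> f' z" using deriv pq z by simp
    with z(3) have "l = f' z" by (rule DERIV_unique)
    with z show ?thesis by blast
  qed
  fix r t assume "r \<in> {0<..<a}" "t \<in> {0<..<a}" "r < t"
  then have rt: "0 < r" "r < t" "t < a" by auto
  obtain z1 where z1: "0 < z1" "z1 < r" "f r = r * f' z1" using mvt[of 0 r] rt \<open>f 0 = 0\<close> by auto
  obtain z2 where z2: "r < z2" "z2 < t" "f t - f r = (t - r) * f' z2" using mvt[of r t] rt by auto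
  have "f' z1 < f' z2" using z1 z2 rt by (intro strict_mono_onD[OF mono]) auto
  then have "(t - r) * f' z1 < (t - r) * f' z2" using rt by simp
  then have "t * f' z1 < f t" using z1(3) z2(3) by (simp add: algebra_simps)
  then show "f r / r < f t / t" using z1(3) rt by (simp add: field_simps)
qed

definition sine_of_slope :: "real \<Rightarrow> real" where
  "sine_of_slope t = t / sqrt (1 + t\<^sup>2)"

lemma sqrt_one_plus_sq_pos: "0 < sqrt (1 + t\<^sup>2)"
  by (simp add: add_pos_nonneg)

lemma abs_sine_of_slope_less_1: "\<bar>sine_of_slope t\<bar> < 1"
proof -
  have "\<bar>t\<bar> < sqrt (1 + t\<^sup>2)" by (rule real_less_rsqrt) simp
  then show ?thesis using sqrt_one_plus_sq_pos[of t] by (simp add: sine_of_slope_def abs_div)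
qed

lemma sine_of_slope_pos_iff: "0 < sine_of_slope t \<longleftrightarrow> 0 < t"
  using sqrt_one_plus_sq_pos[of t] by (simp add: sine_of_slope_def zero_less_divide_iff)

lemma sqrt_one_minus_sine_of_slope_sq: "sqrt (1 - (sine_of_slope t)\<^sup>2) = 1 / sqrt (1 + t\<^sup>2)"
proof -
  have "0 < 1 + t\<^sup>2" by (simp add: add_pos_nonneg)
  then have "1 - (sine_of_slope t)\<^sup>2 = 1 / (1 + t\<^sup>2)"
    by (simp add: sine_of_slope_def power_divide field_simps)
  then show ?thesis by (simp add: real_sqrt_divide)
qed

lemma slope_eq_sine_of_slope: "t = sine_of_slope t / sqrt (1 - (sine_of_slope t)\<^sup>2)"
  using sqrt_one_plus_sq_pos[of t]
  by (simp add: sqrt_one_minus_sine_of_slope_sq) (simp add: sine_of_slope_def)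

lemma tan_of_sine_strict_mono:
  fixes x y :: real
  assumes "0 \<le> y" "y < x" "x < 1"
  shows "y / sqrt (1 - y\<^sup>2) < x / sqrt (1 - x\<^sup>2)"
proof (rule frac_less)
  have "y\<^sup>2 < x\<^sup>2" using assms by (simp add: power_strict_mono)
  then show "sqrt (1 - x\<^sup>2) \<le> sqrt (1 - y\<^sup>2)" by simp
  show "0 < sqrt (1 - x\<^sup>2)" using assms by (simp add: abs_square_less_1)
qed (use assms in auto)

text \<open>The area of the segment of the unit disc cut off by a chord at distance
  \<open>sqrt (1 - x\<^sup>2)\<close> from the centre.\<close>
definition circular_segment_area :: "real \<Rightarrow> real" where
  "circular_segment_area x = arcsin x - x * sqrt (1 - x\<^sup>2)"

lemma circular_segment_area_has_real_derivative:
  fixes x :: real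
  assumes "\<bar>x\<bar> < 1"
  shows "(circular_segment_area has_real_derivative 2 * x\<^sup>2 / sqrt (1 - x\<^sup>2)) (at x)"
proof -
  have "0 < 1 - x\<^sup>2" using assms by (simp add: abs_square_less_1)
  then show ?thesis
    using assms unfolding circular_segment_area_def [abs_def]
    by (auto intro!: derivative_eq_intros simp: field_simps power2_eq_square abs_less_iff)
qed

lemma continuous_on_circular_segment_area: "continuous_on {-1..1} circular_segment_area"
  unfolding circular_segment_area_def [abs_def]
  by (intro continuous_intros) (auto simp: abs_square_le_1)

lemma circular_segment_area_cos:
  assumes "0 \<le> \<gamma>" "\<gamma> \<le> pi"
  shows "circular_segment_area (cos \<gamma>) = pi / 2 - \<gamma> - cos \<gamma> * sin \<gamma>"
proof -
  have "arcsin (cos \<gamma>) = arcsin (sin (pi / 2 - \<gamma>))" by (simp add: sin_diff)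
  also have "\<dots> = pi / 2 - \<gamma>" using assms by (intro arcsin_sin) auto
  finally have "arcsin (cos \<gamma>) = pi / 2 - \<gamma>" .
  moreover have "sqrt (1 - (cos \<gamma>)\<^sup>2) = sin \<gamma>"
    using assms by (simp add: sin_squared_eq[symmetric] sin_ge_zero)
  ultimately show ?thesis by (simp add: circular_segment_area_def)
qed

text \<open>On the circle of radius \<open>R\<close> the inclination \<open>\<psi>\<close> satisfies \<open>sin \<psi> = r / R\<close>;
  this is a primitive of \<open>r * tan \<psi>\<close>.\<close>
lemma scaled_circular_segment_area_has_real_derivative:
  fixes R r :: real
  assumes "0 < R" "\<bar>r\<bar> < R"
  shows "((\<lambda>r. R\<^sup>2 / 2 * circular_segment_area (r / R)) has_real_derivative
           r * ((r / R) / sqrt (1 - (r / R)\<^sup>2))) (at r)"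
proof -
  have "\<bar>r / R\<bar> < 1" using assms by (simp add: abs_div)
  moreover have "((\<lambda>r. r / R) has_real_derivative 1 / R) (at r)"
    using assms by (auto intro!: derivative_eq_intros)
  ultimately have "((\<lambda>r. circular_segment_area (r / R)) has_real_derivative
      2 * (r / R)\<^sup>2 / sqrt (1 - (r / R)\<^sup>2) * (1 / R)) (at r)"
    by (rule DERIV_chain2[OF circular_segment_area_has_real_derivative])
  from DERIV_cmult[OF this, of "R\<^sup>2 / 2"] show ?thesis
    using assms by (simp add: field_simps power2_eq_square)
qed

locale capillary_profile =
  fixes \<kappa> u0 a :: real and u u' :: "real \<Rightarrow> real"
  assumes kappa_pos: "0 < \<kappa>" and u0_pos: "0 < u0" and a_pos: "0 < a"
    and u_0: "u 0 = u0" and u'_0: "u' 0 = 0"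
    and u_deriv: "\<And>r. r \<in> {0..<a} \<Longrightarrow> (u has_real_derivative u' r) (at r within {0..<a})"
    and sin_psi_deriv: "\<And>r. r \<in> {0..<a} \<Longrightarrow>
          ((\<lambda>s. sine_of_slope (u' s)) has_real_derivative \<kappa> * u r) (at r within {0..<a})"
begin

abbreviation sin_psi :: "real \<Rightarrow> real" where
  "sin_psi r \<equiv> sine_of_slope (u' r)"

lemma continuous_on_u: "continuous_on {0..<a} u"
  using u_deriv by (rule DERIV_continuous_on)

lemma continuous_on_sin_psi: "continuous_on {0..<a} sin_psi"
  using sin_psi_deriv by (rule DERIV_continuous_on)

lemma at_within_interval_eq_at: "0 < r \<Longrightarrow> r < a \<Longrightarrow> at r within {0..<a} = at r"
  by (rule at_within_interior) auto

lemma u_has_real_derivative: "0 < r \<Longrightarrow> r < a \<Longrightarrow> (u has_real_derivative u' r) (at r)"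
  using u_deriv[of r] by (simp add: at_within_interval_eq_at)

lemma sin_psi_has_real_derivative:
  "0 < r \<Longrightarrow> r < a \<Longrightarrow> (sin_psi has_real_derivative \<kappa> * u r) (at r)"
  using sin_psi_deriv[of r] by (simp add: at_within_interval_eq_at)

lemma energy_conservation:
  assumes "r \<in> {0..<a}"
  shows "\<kappa> * (u r)\<^sup>2 / 2 + sqrt (1 - (sin_psi r)\<^sup>2) = \<kappa> * u0\<^sup>2 / 2 + 1"
proof -
  define E where "E s = \<kappa> * (u s)\<^sup>2 / 2 + sqrt (1 - (sin_psi s)\<^sup>2)" for s
  have "\<exists>C. \<forall>s\<in>{0..<a}. E s = C"
  proof (rule has_field_derivative_zero_constant)
    fix s assume s: "s \<in> {0..<a}"
    have "0 < 1 - (sin_psi s)\<^sup>2"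
      using abs_sine_of_slope_less_1 by (simp add: abs_square_less_1)
    then have "(E has_field_derivative
        \<kappa> * u s * u' s - \<kappa> * u s * (sin_psi s / sqrt (1 - (sin_psi s)\<^sup>2))) (at s within {0..<a})"
      unfolding E_def using u_deriv[OF s] sin_psi_deriv[OF s]
      by (auto intro!: derivative_eq_intros simp: field_simps)
    then show "(E has_field_derivative 0) (at s within {0..<a})"
      by (simp flip: slope_eq_sine_of_slope)
  qed simp
  moreover have "E 0 = \<kappa> * u0\<^sup>2 / 2 + 1"
    by (simp add: E_def u_0 u'_0 sine_of_slope_def)
  ultimately show ?thesis using assms a_pos unfolding E_def by force
qed

lemma u_sq_eq: "r \<in> {0..<a} \<Longrightarrow> (u r)\<^sup>2 = u0\<^sup>2 + 2 * (1 - sqrt (1 - (sin_psi r)\<^sup>2)) / \<kappa>"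
  using energy_conservation[of r] kappa_pos by (simp add: field_simps)

lemma u_pos:
  assumes r: "r \<in> {0..<a}"
  shows "0 < u r"
proof (rule ccontr)
  assume "\<not> 0 < u r"
  moreover have "0 \<le> u 0" using u_0 u0_pos by simp
  moreover have "continuous_on {0..r} u"
    by (rule continuous_on_subset[OF continuous_on_u]) (use r in auto)
  ultimately obtain z where z: "0 \<le> z" "z \<le> r" "u z = 0"
    using IVT2'[of u r 0 0] r by force
  then have "0 = u0\<^sup>2 + 2 * (1 - sqrt (1 - (sin_psi z)\<^sup>2)) / \<kappa>"
    using u_sq_eq[of z] r by simp
  moreover have "0 \<le> 2 * (1 - sqrt (1 - (sin_psi z)\<^sup>2)) / \<kappa>" using kappa_pos by simp
  moreover have "0 < u0\<^sup>2" using u0_pos by simp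
  ultimately show False by linarith
qed

lemma u_eq_sqrt: "r \<in> {0..<a} \<Longrightarrow> u r = sqrt (u0\<^sup>2 + 2 * (1 - sqrt (1 - (sin_psi r)\<^sup>2)) / \<kappa>)"
  using u_sq_eq u_pos by (metis less_eq_real_def real_sqrt_unique)

lemma strict_mono_sin_psi: "strict_mono_on {0..<a} sin_psi"
  using continuous_on_sin_psi sin_psi_has_real_derivative
  by (rule strict_mono_on_if_deriv_pos) (use kappa_pos u_pos in auto)

lemma sin_psi_pos: "0 < r \<Longrightarrow> r < a \<Longrightarrow> 0 < sin_psi r"
  using strict_mono_onD[OF strict_mono_sin_psi, of 0 r] by (simp add: u'_0 sine_of_slope_def)

lemma strict_mono_u: "strict_mono_on {0..<a} u"
proof (rule strict_mono_on_if_deriv_pos[OF continuous_on_u u_has_real_derivative])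
  fix r assume "0 < r" "r < a"
  then show "0 < u' r" using sin_psi_pos sine_of_slope_pos_iff by blast
qed

lemma strict_mono_sin_psi_quotient: "strict_mono_on {0<..<a} (\<lambda>r. sin_psi r / r)"
proof (rule strict_mono_on_quotient_if_deriv_strict_mono)
  show "sin_psi 0 = 0" by (simp add: u'_0 sine_of_slope_def)
  show "strict_mono_on {0<..<a} (\<lambda>r. \<kappa> * u r)"
    using strict_mono_onD[OF strict_mono_u] kappa_pos by (intro strict_mono_onI) auto
qed (use continuous_on_sin_psi sin_psi_has_real_derivative in auto)

context
  fixes c :: real
  assumes sin_psi_tendsto: "(sin_psi \<longlongrightarrow> c) (at_left a)"
begin

lemma sin_psi_limit_pos: "0 < c"
proof -
  have "strict_mono_on {a/2..<a} sin_psi"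
    using strict_mono_sin_psi by (rule monotone_on_subset) (use a_pos in auto)
  moreover have "a/2 < a" using a_pos by simp
  ultimately have "sin_psi (a/2) < c"
    using sin_psi_tendsto by (rule strict_mono_on_less_left_limit)
  then show ?thesis using sin_psi_pos[of "a/2"] a_pos by simp
qed

lemma sin_psi_limit_le_1: "c \<le> 1"
  using sin_psi_tendsto
  by (rule tendsto_upperbound) (use abs_sine_of_slope_less_1 in \<open>auto simp: abs_less_iff less_imp_le\<close>)

lemma sin_psi_less_chord:
  assumes "0 < r" "r < a"
  shows "sin_psi r < r * c / a"
proof -
  have "strict_mono_on {r..<a} (\<lambda>r. sin_psi r / r)"
    using strict_mono_sin_psi_quotient by (rule monotone_on_subset) (use assms in auto)
  moreover note \<open>r < a\<close>
  moreover have "((\<lambda>r. sin_psi r / r) \<longlongrightarrow> c / a) (at_left a)"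
    using a_pos by (intro tendsto_divide sin_psi_tendsto tendsto_ident_at) auto
  ultimately have "sin_psi r / r < c / a"
    by (rule strict_mono_on_less_left_limit)
  then show ?thesis using assms by (simp add: field_simps)
qed

lemma u_tendsto: "(u \<longlongrightarrow> sqrt (u0\<^sup>2 + 2 * (1 - sqrt (1 - c\<^sup>2)) / \<kappa>)) (at_left a)"
proof (rule Lim_transform_eventually)
  show "((\<lambda>r. sqrt (u0\<^sup>2 + 2 * (1 - sqrt (1 - (sin_psi r)\<^sup>2)) / \<kappa>))
      \<longlongrightarrow> sqrt (u0\<^sup>2 + 2 * (1 - sqrt (1 - c\<^sup>2)) / \<kappa>)) (at_left a)"
    by (intro tendsto_intros sin_psi_tendsto) (use kappa_pos in auto)
  show "eventually (\<lambda>r. sqrt (u0\<^sup>2 + 2 * (1 - sqrt (1 - (sin_psi r)\<^sup>2)) / \<kappa>) = u r) (at_left a)"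
    using eventually_at_left_real[OF a_pos] by eventually_elim (simp add: u_eq_sqrt)
qed

lemma circle_radius: "0 < a / c" "a \<le> a / c"
  using a_pos sin_psi_limit_pos sin_psi_limit_le_1 by (auto simp: le_divide_eq)

lemma slope_less_circle_slope:
  assumes "0 < r" "r < a"
  shows "u' r < (r / (a / c)) / sqrt (1 - (r / (a / c))\<^sup>2)"
proof -
  have "r / (a / c) < 1"
    using assms circle_radius by (simp add: pos_divide_less_eq del: divide_divide_eq_right)
  moreover have "0 < sin_psi r" "sin_psi r < r / (a / c)"
    using assms sin_psi_pos sin_psi_less_chord by auto
  ultimately show ?thesis
    using tan_of_sine_strict_mono[of "sin_psi r" "r / (a / c)"] by (simp flip: slope_eq_sine_of_slope)
qed

text \<open>Since \<open>sin_psi' = \<kappa> * u\<close>, \<open>r * u r - sin_psi r / \<kappa>\<close> is a primitive of \<open>r * u' r\<close>;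
  the comparison function measures it against the same quantity for the circle of radius \<open>a / c\<close>.\<close>
definition circle_comparison :: "real \<Rightarrow> real" where
  "circle_comparison r =
     (a / c)\<^sup>2 / 2 * circular_segment_area (r / (a / c)) + sin_psi r / \<kappa> - r * u r"

lemma continuous_on_circle_segment: "continuous_on {0..a} (\<lambda>r. circular_segment_area (r / (a / c)))"
proof (rule continuous_on_compose2[OF continuous_on_circular_segment_area])
  show "continuous_on {0..a} (\<lambda>r. r / (a / c))"
    using circle_radius by (intro continuous_intros) auto
  show "(\<lambda>r. r / (a / c)) ` {0..a} \<subseteq> {-1..1}"
  proof
    fix y assume "y \<in> (\<lambda>r. r / (a / c)) ` {0..a}"
    then obtain r where r: "0 \<le> r" "r \<le> a" and y: "y = r / (a / c)" by auto
    have "0 \<le> y" unfolding y using r circle_radius by (simp del: divide_divide_eq_right)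
    moreover have "y \<le> 1"
      unfolding y using r circle_radius by (simp add: pos_divide_le_eq del: divide_divide_eq_right)
    ultimately show "y \<in> {-1..1}" by simp
  qed
qed

lemma strict_mono_circle_comparison: "strict_mono_on {0..<a} circle_comparison"
proof (rule strict_mono_on_if_deriv_pos)
  show "continuous_on {0..<a} circle_comparison"
    unfolding circle_comparison_def [abs_def]
    using continuous_on_u continuous_on_sin_psi kappa_pos
    by (intro continuous_intros continuous_on_subset[OF continuous_on_circle_segment]) auto
next
  fix r assume r: "0 < r" "r < a"
  let ?tan_circle = "(r / (a / c)) / sqrt (1 - (r / (a / c))\<^sup>2)"
  have "((\<lambda>r. (a / c)\<^sup>2 / 2 * circular_segment_area (r / (a / c))) has_real_derivative r * ?tan_circle) (at r)"
    using r circle_radius by (intro scaled_circular_segment_area_has_real_derivative) auto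
  moreover have "((\<lambda>r. sin_psi r / \<kappa>) has_real_derivative \<kappa> * u r / \<kappa>) (at r)"
    using r by (intro DERIV_cdivide sin_psi_has_real_derivative)
  moreover have "((\<lambda>r. r * u r) has_real_derivative r * u' r + 1 * u r) (at r)"
    using r by (intro DERIV_mult' DERIV_ident u_has_real_derivative)
  ultimately show "(circle_comparison has_real_derivative
      r * ?tan_circle + \<kappa> * u r / \<kappa> - (r * u' r + 1 * u r)) (at r)"
    unfolding circle_comparison_def [abs_def] by (intro DERIV_diff DERIV_add)
  have "r * u' r < r * ?tan_circle"
    using r by (intro mult_strict_left_mono slope_less_circle_slope)
  then show "0 < r * ?tan_circle + \<kappa> * u r / \<kappa> - (r * u' r + 1 * u r)"
    using kappa_pos by simp
qed

lemma circle_comparison_tendsto: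
  "(circle_comparison \<longlongrightarrow> (a / c)\<^sup>2 / 2 * circular_segment_area c + c / \<kappa>
      - a * sqrt (u0\<^sup>2 + 2 * (1 - sqrt (1 - c\<^sup>2)) / \<kappa>)) (at_left a)"
proof -
  have "a / (a / c) = c" using circle_radius by (auto simp: field_simps)
  then have "((\<lambda>r. circular_segment_area (r / (a / c))) \<longlongrightarrow> circular_segment_area c) (at_left a)"
    using continuous_on_Icc_at_leftD[OF continuous_on_circle_segment a_pos] by simp
  then show ?thesis
    unfolding circle_comparison_def [abs_def] using kappa_pos
    by (intro tendsto_intros sin_psi_tendsto u_tendsto) auto
qed

lemma outer_height_bound:
  "a * sqrt (u0\<^sup>2 + 2 * (1 - sqrt (1 - c\<^sup>2)) / \<kappa>)
     < c / \<kappa> + (a / c)\<^sup>2 / 2 * circular_segment_area c"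
proof -
  have "circle_comparison 0 < (a / c)\<^sup>2 / 2 * circular_segment_area c + c / \<kappa>
      - a * sqrt (u0\<^sup>2 + 2 * (1 - sqrt (1 - c\<^sup>2)) / \<kappa>)"
    using strict_mono_circle_comparison a_pos circle_comparison_tendsto
    by (rule strict_mono_on_less_left_limit)
  moreover have "circle_comparison 0 = 0"
    by (simp add: circle_comparison_def circular_segment_area_def u'_0 sine_of_slope_def)
  ultimately show ?thesis by simp
qed

end

end

theorem mainTheorem11:
  fixes \<kappa> u0 a \<gamma> :: real and u u' :: "real \<Rightarrow> real"
  assumes "\<kappa> > 0" and "u0 > 0" and "a > 0"
    and "0 \<le> \<gamma>" and "\<gamma> < pi / 2"
    and "u 0 = u0" and "u' 0 = 0"
    and "\<And>r. r \<in> {0..<a} \<Longrightarrow> (u has_real_derivative u' r) (at r within {0..<a})"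
    and "\<And>r. r \<in> {0..<a} \<Longrightarrow>
           ((\<lambda>s. u' s / sqrt (1 + (u' s)\<^sup>2)) has_real_derivative \<kappa> * u r) (at r within {0..<a})"
    and "((\<lambda>s. u' s / sqrt (1 + (u' s)\<^sup>2)) \<longlongrightarrow> cos \<gamma>) (at_left a)"
  shows "\<exists>L. (u \<longlongrightarrow> L) (at_left a) \<and>
           L < cos \<gamma> / (\<kappa> * a) - a / 2 * tan \<gamma> + a / (2 * (cos \<gamma>)\<^sup>2) * (pi / 2 - \<gamma>)"
proof -
  interpret capillary_profile \<kappa> u0 a u u'
    by unfold_locales (use assms in \<open>simp_all add: sine_of_slope_def\<close>)
  have lim: "(sin_psi \<longlongrightarrow> cos \<gamma>) (at_left a)"
    using assms(10) by (simp add: sine_of_slope_def)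
  define L where "L = sqrt (u0\<^sup>2 + 2 * (1 - sqrt (1 - (cos \<gamma>)\<^sup>2)) / \<kappa>)"
  have "a * L < cos \<gamma> / \<kappa> + (a / cos \<gamma>)\<^sup>2 / 2 * circular_segment_area (cos \<gamma>)"
    using outer_height_bound[OF lim] by (simp add: L_def)
  also have "\<dots> = a * (cos \<gamma> / (\<kappa> * a) - a / 2 * tan \<gamma> + a / (2 * (cos \<gamma>)\<^sup>2) * (pi / 2 - \<gamma>))"
    using assms(1-5) sin_psi_limit_pos[OF lim]
    by (simp add: circular_segment_area_cos tan_def field_simps power2_eq_square)
  finally have "L < cos \<gamma> / (\<kappa> * a) - a / 2 * tan \<gamma> + a / (2 * (cos \<gamma>)\<^sup>2) * (pi / 2 - \<gamma>)"
    using assms(3) by simp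
  with u_tendsto[OF lim] show ?thesis unfolding L_def by blast
qed

end
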